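(* Let $g:\mathbb R\to(-\infty,\infty]$ be convex. Let $T\subseteq\mathbb R$ be an open set which is a countable union of pairwise disjoint bounded open intervals $(a_k,b_k)$, $k\in\mathbb N$, and let $f:T\to(-\infty,\infty]$ be such that for each $k$ the restriction $f|_{(a_k,b_k)}$ is convex and $\lim_{t\to a_k^+}f(t)=g(a_k)$, $\lim_{t\to b_k^-}f(t)=g(b_k)$. Then the function $h:\mathbb R\to(-\infty,\infty]$ defined by $h(t)=\max\{f(t),g(t)\}$ for $t\in T$ and $h(t)=g(t)$ for $t\notin T$ is convex on $\mathbb R$. *)

theory Defs
  imports "HOL-Analysis.Analysis"
begin

definition ext_convex_on :: "real set \<Rightarrow> (real \<Rightarrow> ereal) \<Rightarrow> bool" where
  "ext_convex_on S f \<longleftrightarrow> convex S \<and>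
     (\<forall>x\<in>S. \<forall>y\<in>S. \<forall>u::real. 0 < u \<and> u < 1 \<longrightarrow>
        f ((1 - u) * x + u * y) \<le> ereal (1 - u) * f x + ereal u * f y)"

end

(*
  A function with values in (-\<infinity>, \<infinity>] is convex iff every affine function lying above it
  at two points x < y lies above it on (x, y).  For h this holds at points outside T, where
  h = g, since g \<le> h and g is convex.  A point p of T lies in some (a_k, b_k), whose endpoints
  are outside T by disjointness.  On [a_k, b_k] the function h is the maximum of g and of f
  extended by its boundary limits, hence convex, and comparing at max x a_k and min y b_k,
  which are x, y or points outside T, gives the bound at p.  That f extended by its limits
  stays convex follows by letting the left end of a chord tend to a_k in Jensen's inequality.
*)
theory Submission
  imports Defs
begin

lemma ext_convex_onD:
  assumes "ext_convex_on S f" "x \<in> S" "y \<in> S" "0 < u" "u < 1"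
  shows "f ((1 - u) * x + u * y) \<le> ereal (1 - u) * f x + ereal u * f y"
  using assms unfolding ext_convex_on_def by blast

lemma ext_convex_on_imp_convex: "ext_convex_on S f \<Longrightarrow> convex S"
  unfolding ext_convex_on_def by blast

lemma ext_convex_on_subset:
  assumes "ext_convex_on S f" "T \<subseteq> S" "convex T"
  shows "ext_convex_on T f"
  using assms unfolding ext_convex_on_def by blast

lemma ext_convex_on_cong:
  assumes "\<And>t. t \<in> S \<Longrightarrow> f t = g t"
  shows "ext_convex_on S f \<longleftrightarrow> ext_convex_on S g"
  using assms unfolding ext_convex_on_def by (auto simp: convex_alt)

lemma ereal_convex_comb_mono:
  fixes a a' b b' :: ereal
  assumes "a \<le> a'" "b \<le> b'" "0 \<le> u" "u \<le> 1"
  shows "ereal (1 - u) * a + ereal u * b \<le> ereal (1 - u) * a' + ereal u * b'"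
  using assms by (intro add_mono ereal_mult_left_mono) auto

lemma ext_convex_on_max:
  assumes f: "ext_convex_on S f" and g: "ext_convex_on S g"
  shows "ext_convex_on S (\<lambda>t. max (f t) (g t))"
  unfolding ext_convex_on_def
proof (intro conjI ballI allI impI)
  show "convex S" using ext_convex_on_imp_convex[OF f] .
  fix x y u :: real
  assume x: "x \<in> S" and y: "y \<in> S" and u: "0 < u \<and> u < 1"
  let ?comb = "\<lambda>v w. ereal (1 - u) * v + ereal u * w"
  have "f ((1 - u) * x + u * y) \<le> ?comb (max (f x) (g x)) (max (f y) (g y))"
    using ext_convex_onD[OF f x y] ereal_convex_comb_mono[of "f x" _ "f y" _ u] u
    by (meson max.cobounded1 less_imp_le order_trans)
  moreover have "g ((1 - u) * x + u * y) \<le> ?comb (max (f x) (g x)) (max (f y) (g y))"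
    using ext_convex_onD[OF g x y] ereal_convex_comb_mono[of "g x" _ "g y" _ u] u
    by (meson max.cobounded2 less_imp_le order_trans)
  ultimately show "max (f ((1 - u) * x + u * y)) (g ((1 - u) * x + u * y))
      \<le> ?comb (max (f x) (g x)) (max (f y) (g y))"
    by simp
qed

lemma ext_convex_on_reflect:
  assumes "ext_convex_on S f"
  shows "ext_convex_on (uminus ` S) (\<lambda>t. f (- t))"
  unfolding ext_convex_on_def
proof (intro conjI ballI allI impI)
  show "convex (uminus ` S)"
    using convex_negations[OF ext_convex_on_imp_convex[OF assms]] by simp
  fix x y u :: real
  assume "x \<in> uminus ` S" "y \<in> uminus ` S" and u: "0 < u \<and> u < 1"
  then obtain x' y' where "x' \<in> S" "y' \<in> S" "x = - x'" "y = - y'" by auto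
  then show "f (- ((1 - u) * x + u * y)) \<le> ereal (1 - u) * f (- x) + ereal u * f (- y)"
    using ext_convex_onD[OF assms, of x' y' u] u by (simp add: add.commute)
qed

lemma ext_convex_on_below_affine:
  fixes h :: "real \<Rightarrow> ereal"
  assumes h: "ext_convex_on S h" and "x \<in> S" "y \<in> S" "x < z" "z < y"
    and "h x \<le> ereal (m * x + c)" "h y \<le> ereal (m * y + c)"
  shows "h z \<le> ereal (m * z + c)"
proof -
  define w where "w = (z - x) / (y - x)"
  have w: "0 < w" "w < 1" using \<open>x < z\<close> \<open>z < y\<close> by (auto simp: w_def field_simps)
  have "w * (y - x) = z - x" using \<open>x < z\<close> \<open>z < y\<close> by (simp add: w_def)
  then have z: "z = (1 - w) * x + w * y" by (simp add: algebra_simps)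
  have "h z \<le> ereal (1 - w) * h x + ereal w * h y"
    using ext_convex_onD[OF assms(1-3) w] z by simp
  also have "\<dots> \<le> ereal (1 - w) * ereal (m * x + c) + ereal w * ereal (m * y + c)"
    using assms(6,7) w by (intro ereal_convex_comb_mono) auto
  also have "\<dots> = ereal (m * z + c)" by (simp add: z algebra_simps)
  finally show ?thesis .
qed

lemma ext_convex_onI_below_affine:
  fixes h :: "real \<Rightarrow> ereal"
  assumes "convex S" and proper: "\<forall>t\<in>S. h t \<noteq> -\<infinity>"
    and below: "\<And>x y z m c. x \<in> S \<Longrightarrow> y \<in> S \<Longrightarrow> x < z \<Longrightarrow> z < y \<Longrightarrow>
      h x \<le> ereal (m * x + c) \<Longrightarrow> h y \<le> ereal (m * y + c) \<Longrightarrow> h z \<le> ereal (m * z + c)"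
  shows "ext_convex_on S h"
proof -
  have less: "h ((1 - u) * x + u * y) \<le> ereal (1 - u) * h x + ereal u * h y"
    if "x \<in> S" "y \<in> S" "x < y" "0 < u" "u < 1" for x y u
  proof (cases "h x = \<infinity> \<or> h y = \<infinity>")
    case True
    then show ?thesis using proper that by auto
  next
    case False
    moreover have "h x \<noteq> -\<infinity>" "h y \<noteq> -\<infinity>" using proper that by auto
    ultimately obtain X Y where XY: "h x = ereal X" "h y = ereal Y"
      by (cases "h x"; cases "h y") auto
    define m where "m = (Y - X) / (y - x)"
    define c where "c = X - m * x"
    have "m * (y - x) = Y - X" using \<open>x < y\<close> by (simp add: m_def)
    then have L: "m * x + c = X" "m * y + c = Y" by (simp_all add: c_def algebra_simps)
    have "0 < u * (y - x)" "0 < (1 - u) * (y - x)" using that by simp_all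
    then have "x < (1 - u) * x + u * y" "(1 - u) * x + u * y < y"
      by (simp_all add: algebra_simps)
    then have "h ((1 - u) * x + u * y) \<le> ereal (m * ((1 - u) * x + u * y) + c)"
      using below that L XY by simp
    also have "\<dots> = ereal ((1 - u) * (m * x + c) + u * (m * y + c))"
      by (simp add: algebra_simps)
    also have "\<dots> = ereal (1 - u) * h x + ereal u * h y" by (simp add: L XY)
    finally show ?thesis .
  qed
  show ?thesis
    unfolding ext_convex_on_def
  proof (intro conjI \<open>convex S\<close> ballI allI impI)
    fix x y u :: real
    assume xy: "x \<in> S" "y \<in> S" and u: "0 < u \<and> u < 1"
    consider "x < y" | "x = y" | "y < x" by linarith
    then show "h ((1 - u) * x + u * y) \<le> ereal (1 - u) * h x + ereal u * h y"
    proof cases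
      case 2
      then show ?thesis using proper xy u by (cases "h x") (auto simp: algebra_simps)
    next
      case 3
      then show ?thesis using less[of y x "1 - u"] xy u by (simp add: add.commute)
    qed (use less xy u in auto)
  qed
qed

lemma ext_convex_on_UNIV_patch:
  fixes g h :: "real \<Rightarrow> ereal" and T :: "real set"
  assumes g: "ext_convex_on UNIV g" and g_proper: "\<forall>t. g t \<noteq> -\<infinity>"
    and g_le_h: "\<And>t. g t \<le> h t" and off_T: "\<And>t. t \<notin> T \<Longrightarrow> h t = g t"
    and patch: "\<And>p. p \<in> T \<Longrightarrow>
      \<exists>\<alpha> \<beta>. \<alpha> < p \<and> p < \<beta> \<and> \<alpha> \<notin> T \<and> \<beta> \<notin> T \<and> ext_convex_on {\<alpha>..\<beta>} h"
  shows "ext_convex_on UNIV h"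
proof (rule ext_convex_onI_below_affine)
  show "\<forall>t\<in>UNIV. h t \<noteq> -\<infinity>"
  proof
    fix t
    show "h t \<noteq> -\<infinity>" using g_le_h[of t] g_proper by auto
  qed
  fix x y z m c
  assume "x \<in> UNIV" "y \<in> UNIV" "x < z" "z < y"
    and hx: "h x \<le> ereal (m * x + c)" and hy: "h y \<le> ereal (m * y + c)"
  have below_off_T: "h t \<le> ereal (m * t + c)" if "x < t" "t < y" "t \<notin> T" for t
  proof -
    have "g x \<le> ereal (m * x + c)" "g y \<le> ereal (m * y + c)"
      using order_trans[OF g_le_h hx] order_trans[OF g_le_h hy] .
    then have "g t \<le> ereal (m * t + c)"
      by (rule ext_convex_on_below_affine[OF g UNIV_I UNIV_I that(1,2)])
    then show ?thesis using off_T \<open>t \<notin> T\<close> by simp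
  qed
  show "h z \<le> ereal (m * z + c)"
  proof (cases "z \<in> T")
    case False
    then show ?thesis using below_off_T \<open>x < z\<close> \<open>z < y\<close> by blast
  next
    case True
    then obtain \<alpha> \<beta> where "\<alpha> < z" "z < \<beta>" "\<alpha> \<notin> T" "\<beta> \<notin> T"
      and h: "ext_convex_on {\<alpha>..\<beta>} h"
      using patch by blast
    define x' where "x' = max x \<alpha>"
    define y' where "y' = min y \<beta>"
    have hx': "h x' \<le> ereal (m * x' + c)"
    proof (cases "x < \<alpha>")
      case True
      then show ?thesis
        using below_off_T[of \<alpha>] \<open>\<alpha> < z\<close> \<open>z < y\<close> \<open>\<alpha> \<notin> T\<close> by (simp add: x'_def)
    qed (use hx in \<open>simp add: x'_def\<close>)
    have hy': "h y' \<le> ereal (m * y' + c)"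
    proof (cases "\<beta> < y")
      case True
      then show ?thesis
        using below_off_T[of \<beta>] \<open>x < z\<close> \<open>z < \<beta>\<close> \<open>\<beta> \<notin> T\<close> by (simp add: y'_def)
    qed (use hy in \<open>simp add: y'_def\<close>)
    have "x' \<in> {\<alpha>..\<beta>}" "y' \<in> {\<alpha>..\<beta>}" "x' < z" "z < y'"
      using \<open>x < z\<close> \<open>z < y\<close> \<open>\<alpha> < z\<close> \<open>z < \<beta>\<close> by (auto simp: x'_def y'_def)
    from ext_convex_on_below_affine[OF h this hx' hy'] show ?thesis .
  qed
qed simp

lemma convex_insert_left_endpoint:
  fixes S :: "real set"
  assumes "convex S" "S \<subseteq> {a<..}" "\<forall>\<^sub>F s in at_right a. s \<in> S"
  shows "convex (insert a S)"
  unfolding is_interval_convex_1[symmetric] is_interval_1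
proof (intro ballI allI impI)
  fix l r x
  assume l: "l \<in> insert a S" and r: "r \<in> insert a S" and x: "l \<le> x \<and> x \<le> r"
  obtain c where "a < c" and c: "\<And>s. a < s \<Longrightarrow> s < c \<Longrightarrow> s \<in> S"
    using assms(3) unfolding eventually_at_right_field by blast
  show "x \<in> insert a S"
  proof (cases "x = a")
    case False
    with l x assms(2) have "a < x" "r \<in> S" using r by force+
    define s where "s = (a + min c x) / 2"
    have "s \<in> S" "s \<le> x" using \<open>a < c\<close> \<open>a < x\<close> c unfolding s_def by auto
    then show ?thesis
      using \<open>convex S\<close> \<open>r \<in> S\<close> x unfolding is_interval_convex_1[symmetric] is_interval_1 by blast
  qed simp
qed

lemma ext_convex_on_le_at_right_limit:
  fixes f :: "real \<Rightarrow> ereal"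
  assumes f: "ext_convex_on S f" and S: "S \<subseteq> {a<..}" "\<forall>\<^sub>F s in at_right a. s \<in> S"
    and lim: "(f \<longlongrightarrow> A) (at_right a)" and "A \<noteq> -\<infinity>"
    and y: "y \<in> S" "f y \<noteq> -\<infinity>" and u: "0 < u" "u < 1"
  shows "f ((1 - u) * a + u * y) \<le> ereal (1 - u) * A + ereal u * f y"
proof -
  define p where "p = (1 - u) * a + u * y"
  \<comment> \<open>the weight that writes p as a convex combination of s and y; it tends to u as s tends to a\<close>
  define w where "w s = (p - s) / (y - s)" for s
  have "a < y" using y S by auto
  then have "0 < u * (y - a)" "0 < (1 - u) * (y - a)" using u by simp_all
  then have "a < p" "p < y" by (simp_all add: p_def algebra_simps)
  have "\<forall>\<^sub>F s in at_right a. s < p"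
    using \<open>a < p\<close> eventually_at_right_field by blast
  with S(2) have bound: "\<forall>\<^sub>F s in at_right a. f p \<le> ereal (1 - w s) * f s + ereal (w s) * f y"
  proof eventually_elim
    case (elim s)
    have "w s * (y - s) = p - s" using elim \<open>p < y\<close> by (simp add: w_def)
    then have "(1 - w s) * s + w s * y = p" by (simp add: algebra_simps)
    moreover have "0 < w s" "w s < 1" using elim \<open>p < y\<close> by (auto simp: w_def field_simps)
    ultimately show ?case using ext_convex_onD[OF f _ y(1)] elim by metis
  qed
  have "w a = u" using \<open>a < y\<close> by (simp add: w_def p_def field_simps)
  then have "(w \<longlongrightarrow> u) (at_right a)"
    unfolding w_def using \<open>a < y\<close> by (auto intro!: tendsto_eq_intros)
  then have "((\<lambda>s. ereal (1 - w s) * f s + ereal (w s) * f y)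
      \<longlongrightarrow> ereal (1 - u) * A + ereal u * f y) (at_right a)"
    using lim u \<open>A \<noteq> -\<infinity>\<close> y(2)
    by (intro tendsto_add_ereal_general tendsto_mult_ereal tendsto_intros) auto
  from tendsto_lowerbound[OF this bound] show ?thesis
    unfolding p_def by simp
qed

lemma ext_convex_on_insert_left:
  fixes f :: "real \<Rightarrow> ereal"
  assumes f: "ext_convex_on S f" and S: "S \<subseteq> {a<..}" "\<forall>\<^sub>F s in at_right a. s \<in> S"
    and lim: "(f \<longlongrightarrow> A) (at_right a)" and "A \<noteq> -\<infinity>" and proper: "\<forall>s\<in>S. f s \<noteq> -\<infinity>"
  shows "ext_convex_on (insert a S) (f(a := A))"
proof -
  have "a \<notin> S" using S by auto
  have endpoint: "(f(a := A)) ((1 - u) * a + u * y) \<le> ereal (1 - u) * A + ereal u * f y"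
    if "y \<in> S" "0 < u" "u < 1" for y u
  proof -
    have "0 < u * (y - a)" using that S by auto
    then have "(1 - u) * a + u * y \<noteq> a" by (auto simp: algebra_simps)
    then show ?thesis
      using ext_convex_on_le_at_right_limit[OF f S lim \<open>A \<noteq> -\<infinity>\<close>] proper that by simp
  qed
  show ?thesis
    unfolding ext_convex_on_def
  proof (intro conjI ballI allI impI)
    show "convex (insert a S)"
      using convex_insert_left_endpoint[OF ext_convex_on_imp_convex[OF f] S] .
    fix x y u :: real
    assume x: "x \<in> insert a S" and y: "y \<in> insert a S" and u: "0 < u \<and> u < 1"
    consider "x = a" "y = a" | "x = a" "y \<in> S" | "x \<in> S" "y = a" | "x \<in> S" "y \<in> S"
      using x y by blast
    then show "(f(a := A)) ((1 - u) * x + u * y)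
        \<le> ereal (1 - u) * (f(a := A)) x + ereal u * (f(a := A)) y"
    proof cases
      case 1
      then show ?thesis using u \<open>A \<noteq> -\<infinity>\<close> by (cases A) (auto simp: algebra_simps)
    next
      case 2
      then show ?thesis using endpoint[of y u] u \<open>a \<notin> S\<close> by auto
    next
      case 3
      then show ?thesis
        using endpoint[of x "1 - u"] u \<open>a \<notin> S\<close> by (auto simp: add.commute)
    next
      case 4
      moreover have "(1 - u) * x + u * y \<in> S"
        using 4 u ext_convex_on_imp_convex[OF f] by (simp add: convex_alt)
      ultimately show ?thesis using ext_convex_onD[OF f] u \<open>a \<notin> S\<close> by auto
    qed
  qed
qed

lemma ext_convex_on_insert_right:
  fixes f :: "real \<Rightarrow> ereal"
  assumes f: "ext_convex_on S f" and S: "S \<subseteq> {..<b}" "\<forall>\<^sub>F s in at_left b. s \<in> S"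
    and lim: "(f \<longlongrightarrow> B) (at_left b)" and "B \<noteq> -\<infinity>" and proper: "\<forall>s\<in>S. f s \<noteq> -\<infinity>"
  shows "ext_convex_on (insert b S) (f(b := B))"
proof -
  have "\<forall>\<^sub>F s in at_right (-b). s \<in> uminus ` S"
    using S(2) unfolding eventually_at_left_to_right by (rule eventually_mono) force
  moreover have "uminus ` S \<subseteq> {-b<..}" using S(1) by auto
  ultimately have "ext_convex_on (insert (-b) (uminus ` S)) ((\<lambda>t. f (- t))(-b := B))"
    using ext_convex_on_reflect[OF f] lim \<open>B \<noteq> -\<infinity>\<close> proper
    by (intro ext_convex_on_insert_left) (auto simp: filterlim_at_left_to_right)
  from ext_convex_on_reflect[OF this] show ?thesis
    by (simp add: image_image fun_upd_def cong: if_cong)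
qed

lemma ext_convex_on_atLeastAtMost_extend:
  fixes f :: "real \<Rightarrow> ereal"
  assumes f: "ext_convex_on {a<..<b} f" and "a < b"
    and "(f \<longlongrightarrow> A) (at_right a)" "(f \<longlongrightarrow> B) (at_left b)" "A \<noteq> -\<infinity>" "B \<noteq> -\<infinity>"
    and proper: "\<forall>t\<in>{a<..<b}. f t \<noteq> -\<infinity>"
  shows "ext_convex_on {a..b} (f(a := A, b := B))"
proof -
  have left: "ext_convex_on (insert a {a<..<b}) (f(a := A))"
    using assms by (intro ext_convex_on_insert_left) (auto simp: eventually_at_right_field)
  have "\<forall>\<^sub>F s in at_left b. f s = (f(a := A)) s"
    using \<open>a < b\<close> by (auto simp: eventually_at_left_field)
  then have right: "(f(a := A) \<longlongrightarrow> B) (at_left b)"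
    using assms(4) by (rule tendsto_cong[THEN iffD1])
  have "ext_convex_on (insert b (insert a {a<..<b})) (f(a := A, b := B))"
  proof (rule ext_convex_on_insert_right[OF left _ _ right \<open>B \<noteq> -\<infinity>\<close>])
    show "insert a {a<..<b} \<subseteq> {..<b}" using \<open>a < b\<close> by auto
    show "\<forall>\<^sub>F s in at_left b. s \<in> insert a {a<..<b}"
      using \<open>a < b\<close> by (auto simp: eventually_at_left_field)
    show "\<forall>s\<in>insert a {a<..<b}. (f(a := A)) s \<noteq> -\<infinity>"
      using \<open>A \<noteq> -\<infinity>\<close> proper by auto
  qed
  moreover have "insert b (insert a {a<..<b}) = {a..b}" using \<open>a < b\<close> by auto
  ultimately show ?thesis by simp
qed

lemma ext_convex_on_atLeastAtMost_glue:
  fixes f g :: "real \<Rightarrow> ereal"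
  assumes g: "ext_convex_on UNIV g" "\<forall>t. g t \<noteq> -\<infinity>"
    and f: "ext_convex_on {a<..<b} f" "\<forall>t\<in>{a<..<b}. f t \<noteq> -\<infinity>"
    and "a < b" "(f \<longlongrightarrow> g a) (at_right a)" "(f \<longlongrightarrow> g b) (at_left b)"
    and T: "{a<..<b} \<subseteq> T" "a \<notin> T" "b \<notin> T"
  shows "ext_convex_on {a..b} (\<lambda>t. if t \<in> T then max (f t) (g t) else g t)"
proof -
  let ?F = "f(a := g a, b := g b)"
  have "ext_convex_on {a..b} ?F"
    using ext_convex_on_atLeastAtMost_extend[OF f(1) \<open>a < b\<close> assms(6,7)] g(2) f(2) by blast
  then have max_convex: "ext_convex_on {a..b} (\<lambda>t. max (?F t) (g t))"
    using ext_convex_on_max ext_convex_on_subset[OF g(1) subset_UNIV convex_closed_interval]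
    by blast
  have "max (?F t) (g t) = (if t \<in> T then max (f t) (g t) else g t)" if t: "t \<in> {a..b}" for t
  proof -
    consider "t = a" | "t = b" | "t \<in> {a<..<b}" using t by (cases "t = a \<or> t = b") auto
    then show ?thesis using \<open>a < b\<close> T by cases auto
  qed
  then have "ext_convex_on {a..b} (\<lambda>t. max (?F t) (g t))
      \<longleftrightarrow> ext_convex_on {a..b} (\<lambda>t. if t \<in> T then max (f t) (g t) else g t)"
    by (rule ext_convex_on_cong)
  with max_convex show ?thesis by blast
qed

lemma endpoints_notin_disjoint_Union:
  fixes a b :: "'i \<Rightarrow> real"
  assumes "\<forall>k\<in>K. a k < b k"
    and disj: "\<forall>k\<in>K. \<forall>l\<in>K. k \<noteq> l \<longrightarrow> {a k<..<b k} \<inter> {a l<..<b l} = {}"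
    and "k \<in> K"
  shows "a k \<notin> (\<Union>l\<in>K. {a l<..<b l})" "b k \<notin> (\<Union>l\<in>K. {a l<..<b l})"
proof -
  have "a k < b k" using assms(1,3) ..
  have "a k \<notin> {a l<..<b l} \<and> b k \<notin> {a l<..<b l}" if "l \<in> K" for l
  proof (cases "l = k")
    case False
    then have empty: "{a k<..<b k} \<inter> {a l<..<b l} = {}" using disj \<open>k \<in> K\<close> that by blast
    have "(a k + min (b k) (b l)) / 2 \<in> {a k<..<b k} \<inter> {a l<..<b l}" if "a k \<in> {a l<..<b l}"
      using that \<open>a k < b k\<close> by auto
    moreover have "(b k + max (a k) (a l)) / 2 \<in> {a k<..<b k} \<inter> {a l<..<b l}" if "b k \<in> {a l<..<b l}"
      using that \<open>a k < b k\<close> by auto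
    ultimately show ?thesis using empty by blast
  qed simp
  then show "a k \<notin> (\<Union>l\<in>K. {a l<..<b l})" "b k \<notin> (\<Union>l\<in>K. {a l<..<b l})" by blast+
qed

theorem lemma3p5:
  fixes g f :: "real \<Rightarrow> ereal" and T :: "real set"
    and K :: "nat set" and a b :: "nat \<Rightarrow> real"
  assumes g_proper: "\<forall>t. g t \<noteq> -\<infinity>"
    and g_convex: "ext_convex_on UNIV g"
    and ab: "\<forall>k\<in>K. a k < b k"
    and disj: "\<forall>k\<in>K. \<forall>l\<in>K. k \<noteq> l \<longrightarrow> {a k<..<b k} \<inter> {a l<..<b l} = {}"
    and T_def: "T = (\<Union>k\<in>K. {a k<..<b k})"
    and f_proper: "\<forall>t\<in>T. f t \<noteq> -\<infinity>"
    and f_convex: "\<forall>k\<in>K. ext_convex_on {a k<..<b k} f"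
    and lim_left: "\<forall>k\<in>K. (f \<longlongrightarrow> g (a k)) (at_right (a k))"
    and lim_right: "\<forall>k\<in>K. (f \<longlongrightarrow> g (b k)) (at_left (b k))"
  shows "ext_convex_on UNIV (\<lambda>t. if t \<in> T then max (f t) (g t) else g t)"
proof (rule ext_convex_on_UNIV_patch[OF g_convex g_proper])
  let ?h = "\<lambda>t. if t \<in> T then max (f t) (g t) else g t"
  show "g t \<le> ?h t" "t \<notin> T \<Longrightarrow> ?h t = g t" for t by simp_all
  fix p
  assume "p \<in> T"
  then obtain k where k: "k \<in> K" "a k < p" "p < b k" unfolding T_def by auto
  have endpoints: "a k \<notin> T" "b k \<notin> T"
    using endpoints_notin_disjoint_Union[OF ab disj k(1)] unfolding T_def .
  have "{a k<..<b k} \<subseteq> T" using k(1) unfolding T_def by blast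
  then have "ext_convex_on {a k..b k} ?h"
    using f_proper ab k(1) endpoints
    by (intro ext_convex_on_atLeastAtMost_glue[OF g_convex g_proper bspec[OF f_convex k(1)] _ _
        bspec[OF lim_left k(1)] bspec[OF lim_right k(1)]]) auto
  with k endpoints show
    "\<exists>\<alpha> \<beta>. \<alpha> < p \<and> p < \<beta> \<and> \<alpha> \<notin> T \<and> \<beta> \<notin> T \<and> ext_convex_on {\<alpha>..\<beta>} ?h"
    by blast
qed

end
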